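(* Consider the reflected geometric Brownian motion (RGBM) model, in which the bank account is $B_t=\mathrm{e}^{rt}$ with $r\geq 0$ and the stock price $S$ solves $\mathrm{d}S_t=\mu S_t\,\mathrm{d}t+\sigma S_t\,\mathrm{d}W_t+\mathrm{d}L_t$ with lower reflecting boundary $b>0$ (where $L$ is the reflection term). Let the European put price with strike $K\geq b$ and maturity $T$ be given, for $(t,S)\in[0,T]\times[b,\infty)$, by the published RGBM put pricing formula \[ \begin{split} P(t,S)&=K\mathrm{e}^{-r(T-t)}\Phi\bigl(-z_1+\sigma\sqrt{T-t}\bigr)-b\mathrm{e}^{-r(T-t)}\Phi(z_4)-S\bigl(\Phi\bigl(-z_4+\sigma\sqrt{T-t}\bigr)-\Phi(z_1)\bigr)\\ &\quad-\frac{1}{\theta}\Bigl(S\bigl(\tfrac{b}{S}\bigr)^{1+\theta}\bigl(\Phi\bigl(z_4+\theta\sigma\sqrt{T-t}\bigr)-\Phi(z_3)\bigr)-b\mathrm{e}^{-r(T-t)}\Phi(z_4)+K\mathrm{e}^{-r(T-t)}\bigl(\tfrac{K}{b}\bigr)^{\theta-1}\Phi\bigl(z_3-\theta\sigma\sqrt{T-t}\bigr)\Bigr), \end{split} \] where $z_1=\frac{\ln\frac{S}{K}+(r+\frac12\sigma^2)(T-t)}{\sigma\sqrt{T-t}}$, $z_3=\frac{\ln\frac{b^2}{KS}+(r+\frac12\sigma^2)(T-t)}{\sigma\sqrt{T-t}}$, $z_4=\frac{\ln\frac{b}{S}-(r-\frac12\sigma^2)(T-t)}{\sigma\sqrt{T-t}}$,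 $\theta=\frac{2r}{\sigma^2}$, and $\Phi$ is the standard normal cumulative distribution function. Then the put price obtained from this formula violates the model-independent lower bound $P(t,S)\geq K\mathrm{e}^{-r(T-t)}-S$ (which must hold for all $(t,S)\in[0,T]\times[b,\infty)$ whenever an equivalent risk-neutral probability measure exists) under certain parameter regimes, when the stock price is close to the reflecting boundary $b$.
   Context: The lower bound $P(t,S)\geq \mathrm{E}^{\mathbb{Q}}_{t,S}(\mathrm{e}^{-r(T-t)}(K-S_T))\geq K\mathrm{e}^{-r(T-t)}-S$ follows if $\mathbb{Q}$ is an equivalent risk-neutral probability measure, since the discounted stock price is then a nonnegative $\mathbb{Q}$-local martingale and hence a $\mathbb{Q}$-supermartingale. $\Phi$ denotes the standard normal CDF. *)

theory Defs
  imports "HOL-Probability.Probability"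
begin

definition Phi :: "real \<Rightarrow> real" where
  "Phi x = measure (density lborel std_normal_density) {..x}"

definition rgbm_put ::
  "real \<Rightarrow> real \<Rightarrow> real \<Rightarrow> real \<Rightarrow> real \<Rightarrow> real \<Rightarrow> real \<Rightarrow> real" where
  "rgbm_put r \<sigma> b K T t S =
    (let tau = T - t;
         v = \<sigma> * sqrt tau;
         D = exp (- r * tau);
         \<theta> = 2 * r / \<sigma>\<^sup>2;
         z1 = (ln (S / K) + (r + \<sigma>\<^sup>2 / 2) * tau) / v;
         z3 = (ln (b\<^sup>2 / (K * S)) + (r + \<sigma>\<^sup>2 / 2) * tau) / v;
         z4 = (ln (b / S) - (r - \<sigma>\<^sup>2 / 2) * tau) / v
     in K * D * Phi (- z1 + v) - b * D * Phi z4
        - S * (Phi (- z4 + v) - Phi z1)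
        - (1 / \<theta>) * (S * (b / S) powr (1 + \<theta>) * (Phi (z4 + \<theta> * v) - Phi z3)
                      - b * D * Phi z4
                      + K * D * (K / b) powr (\<theta> - 1) * Phi (z3 - \<theta> * v)))"

end

theory Submission
  imports Defs
begin

text \<open>Choose \<open>\<sigma>\<^sup>2 = 2r\<close>, so that \<open>\<theta> = 1\<close>, and \<open>K = b exp (2r\<tau>)\<close> with \<open>\<tau> = T - t\<close>.
  At \<open>S = b\<close> all of \<open>z\<^sub>1, z\<^sub>3, z\<^sub>4\<close> vanish and, with \<open>v = \<sigma> sqrt \<tau>\<close>, the formula
  collapses to \<open>P(t,b) = b (exp (r\<tau>) - 1) (2 \<Phi>(v) - 1)\<close>, while the lower bound is
  \<open>K exp (-r\<tau>) - b = b (exp (r\<tau>) - 1)\<close>. The bound therefore fails at \<open>S = b\<close> by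
  \<open>2b (exp (r\<tau>) - 1) (1 - \<Phi>(v)) > 0\<close>, and by continuity of the formula in \<open>S\<close> also
  for all \<open>S\<close> close enough to \<open>b\<close>.\<close>

interpretation std_normal: real_distribution std_normal_distribution
  by (rule real_dist_normal_dist)

lemma Phi_eq_cdf: "Phi = cdf std_normal_distribution"
  by (simp add: Phi_def cdf_def2 fun_eq_iff)

lemma measure_std_normal_singleton: "measure std_normal_distribution {x} = 0"
proof -
  have "emeasure std_normal_distribution {x} = 0"
    by (subst emeasure_density) (auto intro!: nn_integral_null_set)
  then show ?thesis
    by (simp add: measure_def)
qed

lemma isCont_Phi: "isCont Phi x"
  by (simp add: Phi_eq_cdf std_normal.isCont_cdf measure_std_normal_singleton)

lemma isCont_Phi_compose [continuous_intros]: "isCont f x \<Longrightarrow> isCont (\<lambda>y. Phi (f y)) x"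
  using isCont_o2[OF _ isCont_Phi] by blast

lemma Phi_minus: "Phi (- x) = 1 - Phi x"
proof -
  let ?d = "\<lambda>y. ennreal (std_normal_density y)"
  have "emeasure std_normal_distribution {..-x} = (\<integral>\<^sup>+y. ?d y * indicator {..-x} y \<partial>lborel)"
    by (subst emeasure_density) auto
  also have "\<dots> = (\<integral>\<^sup>+y. ?d (0 + (-1) * y) * indicator {..-x} (0 + (-1) * y) \<partial>lborel)"
    using nn_integral_real_affine[of "\<lambda>y. ?d y * indicator {..-x} y" "-1" 0] by simp
  also have "\<dots> = (\<integral>\<^sup>+y. ?d y * indicator {x..} y \<partial>lborel)"
    by (intro nn_integral_cong) (auto simp: std_normal_density_def indicator_def)
  also have "\<dots> = emeasure std_normal_distribution {x..}"
    by (subst emeasure_density) auto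
  finally have "Phi (- x) = measure std_normal_distribution {x..}"
    by (simp add: Phi_def measure_def)
  also have "\<dots> = 1 - measure std_normal_distribution {..<x}"
    using std_normal.prob_compl[of "{x..}"] by (simp add: Compl_eq_Diff_UNIV[symmetric])
  also have "measure std_normal_distribution {..<x} = Phi x"
  proof -
    have "{..x} = {..<x} \<union> {x}"
      by auto
    then show ?thesis
      using std_normal.finite_measure_Union[of "{..<x}" "{x}"]
      by (simp add: Phi_def measure_std_normal_singleton)
  qed
  finally show ?thesis .
qed

lemma Phi_pos: "0 < Phi x"
proof -
  have "{..x} \<notin> null_sets lborel"
  proof
    assume "{..x} \<in> null_sets lborel"
    then have "{x - 1..x} \<in> null_sets lborel"
      by (rule null_sets_subset) auto
    then show False
      by (simp add: null_sets_def)
  qed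
  then have "\<not> (AE y in lborel. y \<in> {..x} \<longrightarrow> ennreal (std_normal_density y) = 0)"
    using AE_iff_null_sets[of "{..x}" lborel] by (simp add: std_normal_density_def)
  then have "{..x} \<notin> null_sets std_normal_distribution"
    by (simp add: null_sets_density_iff)
  then show ?thesis
    by (simp add: Phi_def std_normal.emeasure_eq_measure null_sets_def zero_less_measure_iff)
qed

lemma Phi_less_1: "Phi x < 1"
  using Phi_pos[of "- x"] by (simp add: Phi_minus)

lemma isCont_rgbm_put:
  assumes "0 < \<sigma>" "t < T" "0 < b" "0 < K" "0 < S"
  shows "isCont (rgbm_put r \<sigma> b K T t) S"
  unfolding rgbm_put_def Let_def using assms
  by (intro continuous_intros) auto

lemma rgbm_put_at_boundary:
  assumes "0 < r" "t < T" "0 < b"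
  shows "rgbm_put r (sqrt (2 * r)) b (b * exp (2 * r * (T - t))) T t b
       = b * (exp (r * (T - t)) - 1) * (2 * Phi (sqrt (2 * r) * sqrt (T - t)) - 1)"
proof -
  define \<sigma> where "\<sigma> = sqrt (2 * r)"
  define K where "K = b * exp (2 * r * (T - t))"
  define \<tau> where "\<tau> = T - t"
  define v where "v = \<sigma> * sqrt \<tau>"
  have "0 < v"
    using assms by (simp add: \<sigma>_def \<tau>_def v_def)
  have \<sigma>_sq: "\<sigma>\<^sup>2 = 2 * r"
    using assms by (simp add: \<sigma>_def)
  have "ln (b / K) = - (2 * r * \<tau>)"
    using assms by (simp add: K_def \<tau>_def ln_div)
  then have z1: "(ln (b / K) + (r + \<sigma>\<^sup>2 / 2) * \<tau>) / v = 0"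
    by (simp add: \<sigma>_sq)
  have z3: "(ln (b\<^sup>2 / (K * b)) + (r + \<sigma>\<^sup>2 / 2) * \<tau>) / v = 0"
    using z1 assms by (simp add: power2_eq_square)
  have z4: "(ln (b / b) - (r - \<sigma>\<^sup>2 / 2) * \<tau>) / v = 0"
    by (simp add: \<sigma>_sq)
  have \<theta>: "2 * r / \<sigma>\<^sup>2 = 1"
    using assms by (simp add: \<sigma>_sq)
  have discount: "K * exp (- r * \<tau>) = b * exp (r * \<tau>)"
    by (simp add: K_def \<tau>_def mult.assoc flip: exp_add)
  have "Phi 0 = 1 / 2"
    using Phi_minus[of 0] by simp
  then show ?thesis
    unfolding rgbm_put_def Let_def \<sigma>_def[symmetric] K_def[symmetric]
    unfolding \<tau>_def[symmetric] v_def[symmetric] z1 z3 z4 \<theta> discount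
    using assms by (simp add: K_def Phi_minus algebra_simps)
qed

lemma rgbm_put_below_lower_bound_near_boundary:
  fixes r b t T :: real
  defines "K \<equiv> b * exp (2 * r * (T - t))"
  assumes "0 < r" "t < T" "0 < b"
  shows "\<exists>\<delta> > 0. \<forall>S. b \<le> S \<and> S < b + \<delta> \<longrightarrow>
           rgbm_put r (sqrt (2 * r)) b K T t S < K * exp (- r * (T - t)) - S"
proof -
  let ?gap = "\<lambda>S. K * exp (- r * (T - t)) - S - rgbm_put r (sqrt (2 * r)) b K T t S"
  have "K * exp (- r * (T - t)) = b * exp (r * (T - t))"
    by (simp add: K_def mult.assoc flip: exp_add)
  moreover have "rgbm_put r (sqrt (2 * r)) b K T t b
      = b * (exp (r * (T - t)) - 1) * (2 * Phi (sqrt (2 * r) * sqrt (T - t)) - 1)"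
    unfolding K_def by (rule rgbm_put_at_boundary[OF assms(2-4)])
  ultimately have "?gap b = 2 * b * (exp (r * (T - t)) - 1) * (1 - Phi (sqrt (2 * r) * sqrt (T - t)))"
    by (simp add: algebra_simps)
  also have "\<dots> > 0"
    using assms Phi_less_1 by simp
  finally have "0 < ?gap b" .
  moreover have "isCont ?gap b"
    using assms by (intro continuous_intros isCont_rgbm_put) (auto simp: K_def)
  then have "(?gap \<longlongrightarrow> ?gap b) (nhds b)"
    unfolding isCont_def by (rule tendsto_at_iff_tendsto_nhds[THEN iffD1])
  ultimately have "\<forall>\<^sub>F S in nhds b. 0 < ?gap S"
    using order_tendstoD(1) by blast
  then obtain \<delta> where "0 < \<delta>" "\<And>S. dist S b < \<delta> \<Longrightarrow> 0 < ?gap S"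
    unfolding eventually_nhds_metric by blast
  then show ?thesis
    by (intro exI[of _ \<delta>]) (auto simp: dist_real_def)
qed

theorem proposition3p4:
  shows "\<exists>r \<sigma> b K T t. r > 0 \<and> \<sigma> > 0 \<and> b > 0 \<and> K \<ge> b \<and> 0 \<le> t \<and> t < T \<and>
           (\<exists>\<delta> > 0. \<forall>S. b \<le> S \<and> S < b + \<delta> \<longrightarrow>
               rgbm_put r \<sigma> b K T t S < K * exp (- r * (T - t)) - S)"
  using rgbm_put_below_lower_bound_near_boundary[of 1 0 1 1]
  by (intro exI[of _ 1] exI[of _ "sqrt 2"] exI[of _ 1] exI[of _ "exp 2"] exI[of _ 1] exI[of _ 0])
    simp

end
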